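(* Every Gibonacci sequence $\{G_n(a,b)\}$ (with $a,b\in\mathbb{Z}$, $\gcd(a,b)=1$) is complete mod $14$ (and hence also mod $2$ and mod $7$).
   Context: For integers $a,b$ with $\gcd(a,b)=1$, the Gibonacci sequence $\{G_n(a,b)\}_{n\ge1}$ is defined by $G_1=a$, $G_2=b$, $G_{n+1}=G_{n-1}+G_n$. A sequence is complete mod $m$ if every residue class modulo $m$ contains some term of the sequence. *)

theory Defs
  imports Main
begin

text \<open>Gibonacci sequence G_n(a,b), indexed from n = 1: G_1 = a, G_2 = b,
  G_{n+1} = G_{n-1} + G_n. We use 0-based shifted function gib a b k = G_{k+1}.\<close>
fun gib0 :: "int \<Rightarrow> int \<Rightarrow> nat \<Rightarrow> int" where
  "gib0 a b 0 = a"
| "gib0 a b (Suc 0) = b"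
| "gib0 a b (Suc (Suc k)) = gib0 a b k + gib0 a b (Suc k)"

definition G :: "int \<Rightarrow> int \<Rightarrow> nat \<Rightarrow> int" where
  "G a b n = gib0 a b (n - 1)"

definition complete_mod :: "(nat \<Rightarrow> int) \<Rightarrow> int \<Rightarrow> bool" where
  "complete_mod s m \<longleftrightarrow> (\<forall>r::int. \<exists>n\<ge>1. s n mod m = r mod m)"

end

theory Submission
  imports Defs "HOL-Number_Theory.Number_Theory"
begin

text \<open>Modulo m the pair of consecutive terms evolves by the Fibonacci matrix, so the
  sequence repeats with period n + 1 as soon as F_n = 1 and F_(n+1) = 0 mod m;
  this gives period 3 mod 2 and period 16 mod 7. Coprimality of a and b makes the
  initial pair nonzero mod 2 and mod 7, and a finite check shows that one period
  of any nonzero initial pair meets every residue. As 3 and 16 are coprime, the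
  Chinese remainder theorem yields an index whose position in both periods is
  prescribed, so any residue mod 2 and any residue mod 7 are hit simultaneously,
  i.e. every residue mod 14.\<close>

lemma gib0_add_Suc:
  "gib0 a b (k + Suc n) = int (fib n) * gib0 a b k + int (fib (Suc n)) * gib0 a b (Suc k)"
proof (induction n rule: fib.induct)
  case (3 n)
  have "gib0 a b (k + Suc (Suc (Suc n))) = gib0 a b (k + Suc n) + gib0 a b (k + Suc (Suc n))"
    by (simp add: add_Suc_right)
  with 3 show ?case
    by (simp add: algebra_simps)
qed simp_all

lemma gib0_period_mod:
  assumes "[int (fib n) = 1] (mod m)" and "m dvd int (fib (Suc n))"
  shows "[gib0 a b (k + Suc n) = gib0 a b k] (mod m)"
proof -
  have "[int (fib n) * gib0 a b k + int (fib (Suc n)) * gib0 a b (Suc k)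
        = 1 * gib0 a b k + 0 * gib0 a b (Suc k)] (mod m)"
    using assms by (intro cong_add cong_mult cong_refl) (simp_all add: cong_0_iff)
  then show ?thesis
    by (simp only: gib0_add_Suc) simp
qed

lemma cong_mod_period:
  fixes f :: "nat \<Rightarrow> 'a::unique_euclidean_ring"
  assumes "\<And>k. [f (k + p) = f k] (mod m)"
  shows "[f k = f (k mod p)] (mod m)"
proof -
  have "[f (j + p * q) = f j] (mod m)" for j q
  proof (induction q)
    case (Suc q)
    have "[f (j + p * q + p) = f (j + p * q)] (mod m)"
      by (rule assms)
    with Suc.IH show ?case
      by (simp add: ac_simps cong_trans)
  qed simp
  from this[of "k mod p" "k div p"] show ?thesis
    by (simp add: cong_sym)
qed

fun gib_residues :: "int \<Rightarrow> int \<Rightarrow> int \<Rightarrow> nat \<Rightarrow> int list" where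
  "gib_residues m x y 0 = []"
| "gib_residues m x y (Suc n) = x # gib_residues m y ((x + y) mod m) n"

lemma gib_residues_numeral:
  "gib_residues m x y (numeral n) = x # gib_residues m y ((x + y) mod m) (pred_numeral n)"
  by (simp add: numeral_eq_Suc)

lemma length_gib_residues [simp]: "length (gib_residues m x y n) = n"
  by (induction n arbitrary: x y) auto

lemma nth_gib_residues:
  "i < n \<Longrightarrow> gib_residues m (gib0 a b k mod m) (gib0 a b (Suc k) mod m) n ! i = gib0 a b (k + i) mod m"
proof (induction n arbitrary: k i)
  case (Suc n)
  show ?case
  proof (cases i)
    case (Suc j)
    have "(gib0 a b k mod m + gib0 a b (Suc k) mod m) mod m = gib0 a b (Suc (Suc k)) mod m"
      by (simp add: mod_add_eq)
    with Suc.IH[of j "Suc k"] Suc.prems \<open>i = Suc j\<close> show ?thesis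
      by simp
  qed simp
qed simp

lemma gib0_hits_residue:
  assumes "m > 0" and "\<not> (m dvd a \<and> m dvd b)"
    and residues: "\<forall>x\<in>{0..<m}. \<forall>y\<in>{0..<m}. (x, y) \<noteq> (0, 0) \<longrightarrow> {0..<m} \<subseteq> set (gib_residues m x y p)"
  shows "\<exists>j<p. [gib0 a b j = r] (mod m)"
proof -
  have "(a mod m, b mod m) \<noteq> (0, 0)"
    using assms(2) by (auto simp: dvd_eq_mod_eq_0)
  moreover have "a mod m \<in> {0..<m}" and "b mod m \<in> {0..<m}" and "r mod m \<in> {0..<m}"
    using \<open>m > 0\<close> by simp_all
  ultimately have "r mod m \<in> set (gib_residues m (a mod m) (b mod m) p)"
    using residues by blast
  then obtain j where "j < p" and "gib_residues m (a mod m) (b mod m) p ! j = r mod m"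
    by (auto simp: in_set_conv_nth)
  moreover have "gib_residues m (a mod m) (b mod m) p ! j = gib0 a b j mod m"
    using nth_gib_residues[OF \<open>j < p\<close>, of m a b 0] by simp
  ultimately show ?thesis
    by (auto simp: cong_def)
qed

lemma gib0_hits_residue_mod_2:
  assumes "coprime a b"
  shows "\<exists>j<3. [gib0 a b j = r] (mod 2)"
proof (rule gib0_hits_residue)
  show "\<not> (2 dvd a \<and> 2 dvd b)"
    using coprime_common_divisor[OF assms, of 2] by auto
  have residues: "{0..<2::int} = {0, 1}"
    by auto
  show "\<forall>x\<in>{0..<2}. \<forall>y\<in>{0..<2}. (x, y) \<noteq> (0, 0) \<longrightarrow> {0..<2} \<subseteq> set (gib_residues 2 x y 3)"
    unfolding residues ball_simps by (simp add: gib_residues_numeral)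
qed simp

lemma gib0_hits_residue_mod_7:
  assumes "coprime a b"
  shows "\<exists>j<16. [gib0 a b j = r] (mod 7)"
proof (rule gib0_hits_residue)
  show "\<not> (7 dvd a \<and> 7 dvd b)"
    using coprime_common_divisor[OF assms, of 7] by auto
  have residues: "{0..<7::int} = {0, 1, 2, 3, 4, 5, 6}"
    by auto
  show "\<forall>x\<in>{0..<7}. \<forall>y\<in>{0..<7}. (x, y) \<noteq> (0, 0) \<longrightarrow> {0..<7} \<subseteq> set (gib_residues 7 x y 16)"
    txt \<open>Expanding the bounded quantifiers first keeps the simplifier from unfolding
      the list symbolically, which would blow up exponentially.\<close>
    unfolding residues ball_simps by (simp add: gib_residues_numeral)
qed simp

lemma gib0_period_mod_2: "[gib0 a b (k + 3) = gib0 a b k] (mod 2)"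
proof -
  have "[int (fib 2) = 1] (mod 2)" and "2 dvd int (fib (Suc 2))"
    by (simp_all add: numeral_eq_Suc)
  from gib0_period_mod[OF this] show ?thesis
    by simp
qed

lemma gib0_period_mod_7: "[gib0 a b (k + 16) = gib0 a b k] (mod 7)"
proof -
  have "fib 15 = 610" and "fib 16 = 987"
    by (simp_all add: numeral_eq_Suc)
  then have "[int (fib 15) = 1] (mod 7)" and "7 dvd int (fib (Suc 15))"
    by (simp_all add: cong_def)
  from gib0_period_mod[OF this] show ?thesis
    by simp
qed

lemma gib0_hits_residue_mod_14:
  assumes "coprime a b"
  shows "\<exists>k. [gib0 a b k = r] (mod 14)"
proof -
  obtain i where "i < 3" and i: "[gib0 a b i = r] (mod 2)"
    using gib0_hits_residue_mod_2[OF assms] by blast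
  obtain j where "j < 16" and j: "[gib0 a b j = r] (mod 7)"
    using gib0_hits_residue_mod_7[OF assms] by blast
  have "coprime (3::nat) 16"
    by (simp add: coprime_iff_gcd_eq_1 gcd_non_0_nat)
  then obtain k where "[k = i] (mod 3)" and "[k = j] (mod 16)"
    using binary_chinese_remainder_nat by blast
  with \<open>i < 3\<close> \<open>j < 16\<close> have "k mod 3 = i" and "k mod 16 = j"
    by (simp_all add: cong_def)
  have "[gib0 a b k = gib0 a b i] (mod 2)"
    using cong_mod_period[where f = "gib0 a b" and k = k, OF gib0_period_mod_2]
    unfolding \<open>k mod 3 = i\<close> .
  from this i have "[gib0 a b k = r] (mod 2)"
    by (rule cong_trans)
  moreover have "[gib0 a b k = gib0 a b j] (mod 7)"
    using cong_mod_period[where f = "gib0 a b" and k = k, OF gib0_period_mod_7]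
    unfolding \<open>k mod 16 = j\<close> .
  from this j have "[gib0 a b k = r] (mod 7)"
    by (rule cong_trans)
  ultimately have "[gib0 a b k = r] (mod 2 * 7)"
    by (rule coprime_cong_mult) simp
  then show ?thesis
    by auto
qed

lemma complete_mod_G_iff: "complete_mod (G a b) m \<longleftrightarrow> (\<forall>r. \<exists>k. [gib0 a b k = r] (mod m))"
proof -
  have "(\<exists>n\<ge>1. G a b n mod m = r mod m) \<longleftrightarrow> (\<exists>k. gib0 a b k mod m = r mod m)" for r
  proof
    assume "\<exists>n\<ge>1. G a b n mod m = r mod m"
    then show "\<exists>k. gib0 a b k mod m = r mod m"
      by (auto simp: G_def)
  next
    assume "\<exists>k. gib0 a b k mod m = r mod m"
    then obtain k where "G a b (Suc k) mod m = r mod m"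
      by (auto simp: G_def)
    then show "\<exists>n\<ge>1. G a b n mod m = r mod m"
      by (intro exI[of _ "Suc k"]) simp
  qed
  then show ?thesis
    unfolding complete_mod_def cong_def by (simp only:)
qed

lemma complete_mod_dvd:
  assumes "complete_mod s m" and "d dvd m"
  shows "complete_mod s d"
  unfolding complete_mod_def
proof
  fix r
  obtain n where "n \<ge> 1" and "s n mod m = r mod m"
    using assms(1) by (auto simp: complete_mod_def)
  then have "s n mod d = r mod d"
    by (metis assms(2) mod_mod_cancel)
  with \<open>n \<ge> 1\<close> show "\<exists>n\<ge>1. s n mod d = r mod d"
    by blast
qed

theorem mainTheorem13:
  fixes a b :: int
  assumes "gcd a b = 1"
  shows "complete_mod (G a b) 14 \<and> complete_mod (G a b) 2 \<and> complete_mod (G a b) 7"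
proof -
  have "complete_mod (G a b) 14"
    using gib0_hits_residue_mod_14 assms by (simp add: complete_mod_G_iff coprime_iff_gcd_eq_1)
  moreover have "(2::int) dvd 14" and "(7::int) dvd 14"
    by simp_all
  ultimately show ?thesis
    by (blast intro: complete_mod_dvd)
qed

end
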